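(* Let $\boldsymbol{k}$ be a field of characteristic zero, $P=\boldsymbol{k}[x^1,x^2,x^3]$, $f=x^1x^2-x^3x^3$, $I=(f)$ and $A=P/I$, where $P$ carries the Poisson bracket determined by $\{x^1,x^2\}=4x^3$, $\{x^1,x^3\}=2x^1$, $\{x^2,x^3\}=-2x^2$ (so $I$ is a Poisson ideal and $A$ a Poisson algebra). Then there exists $\omega\in\operatorname{Alt}^2_A(\operatorname{Der}(A),A)$ which is a symplectic form on $\operatorname{Spec}(A)$, i.e. (i) $\omega$ is non-degenerate, (ii) $\mathrm d_{\mathrm{dR}}\omega=0$, and (iii) $\omega(\{a,\ \}+I\operatorname{Der}(P),\,X+I\operatorname{Der}(P))=X(a)+I$ for all $a\in P$ and all $X\in\operatorname{Der}_I(P)$.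
   Context: $\operatorname{Der}(A)$ is the $A$-module of $\boldsymbol{k}$-derivations of $A$, identified with $\operatorname{Der}_I(P)/I\operatorname{Der}(P)$ where $\operatorname{Der}_I(P)=\{X\in\operatorname{Der}(P):X(I)\subseteq I\}$; $(\operatorname{Der}(A),A)$ is a Lie-Rinehart algebra with the commutator bracket. $\operatorname{Alt}^m_A(\operatorname{Der}(A),A)$ denotes alternating $A$-multilinear maps $\operatorname{Der}(A)^m\to A$, and $\mathrm d_{\mathrm{dR}}$ is the Koszul differential $(\mathrm d\omega)(X_0,\dots,X_m)=\sum_i(-1)^iX_i(\omega(X_0,\dots,\widehat{X_i},\dots,X_m))+\sum_{i<j}(-1)^{i+j}\omega([X_i,X_j],X_0,\dots,\widehat{X_i},\dots,\widehat{X_j},\dots,X_m)$ (the naive de Rham complex). A 2-form $\omega$ is non-degenerate if for $X\in\operatorname{Der}(A)$, $\omega(X,Y)=0$ for all $Y\in\operatorname{Der}(A)$ implies $X=0$. *)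

theory Defs
  imports "HOL-Library.Poly_Mapping"
begin

datatype var = V1 | V2 | V3

text \<open>P = k[x^1,x^2,x^3]: polynomials as finitely supported maps from monomials
 (finitely supported exponent vectors var =>0 nat) to coefficients.\<close>
type_synonym 'k pol = "(var \<Rightarrow>\<^sub>0 nat) \<Rightarrow>\<^sub>0 'k"

definition pvar :: "var \<Rightarrow> 'k::comm_ring_1 pol" where
  "pvar v = Poly_Mapping.single (Poly_Mapping.single v 1) 1"

definition pconst :: "'k::comm_ring_1 \<Rightarrow> 'k pol" where
  "pconst c = Poly_Mapping.single 0 c"

definition pderiv_var :: "var \<Rightarrow> 'k::comm_ring_1 pol \<Rightarrow> 'k pol" where
  "pderiv_var v p = (\<Sum>m::var \<Rightarrow>\<^sub>0 nat\<in>Poly_Mapping.keys p.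
      Poly_Mapping.single (m - Poly_Mapping.single v (1::nat)) (of_nat (Poly_Mapping.lookup m v) * Poly_Mapping.lookup p m))"

definition fpol :: "'k::comm_ring_1 pol" where
  "fpol = pvar V1 * pvar V2 - pvar V3 * pvar V3"

definition inI :: "'k::comm_ring_1 pol \<Rightarrow> bool" where
  "inI p \<longleftrightarrow> fpol dvd p"

definition pbr :: "'k::comm_ring_1 pol \<Rightarrow> 'k pol \<Rightarrow> 'k pol" where
  "pbr p q =
     pconst 4 * pvar V3 * (pderiv_var V1 p * pderiv_var V2 q - pderiv_var V2 p * pderiv_var V1 q)
   + pconst 2 * pvar V1 * (pderiv_var V1 p * pderiv_var V3 q - pderiv_var V3 p * pderiv_var V1 q)
   - pconst 2 * pvar V2 * (pderiv_var V2 p * pderiv_var V3 q - pderiv_var V3 p * pderiv_var V2 q)"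

definition ham :: "'k::comm_ring_1 pol \<Rightarrow> 'k pol \<Rightarrow> 'k pol" where
  "ham a = (\<lambda>q. pbr a q)"

definition DerP :: "('k::comm_ring_1 pol \<Rightarrow> 'k pol) set" where
  "DerP = {D. (\<forall>p q. D (p + q) = D p + D q)
            \<and> (\<forall>c p. D (pconst c * p) = pconst c * D p)
            \<and> (\<forall>p q. D (p * q) = p * D q + q * D p)}"

definition DerIP :: "('k::comm_ring_1 pol \<Rightarrow> 'k pol) set" where
  "DerIP = {D \<in> DerP. \<forall>p. inI p \<longrightarrow> inI (D p)}"

text \<open>I Der(P); since I = (f) is principal this is f Der(P).\<close>
definition IDerP :: "('k::comm_ring_1 pol \<Rightarrow> 'k pol) set" where
  "IDerP = {X. \<exists>D\<in>DerP. \<forall>p. X p = fpol * D p}"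

text \<open>Der(A) = Der_I(P)/I Der(P): equality of classes.\<close>
definition der_eq :: "('k::comm_ring_1 pol \<Rightarrow> 'k pol) \<Rightarrow> ('k pol \<Rightarrow> 'k pol) \<Rightarrow> bool" where
  "der_eq X Y \<longleftrightarrow> (\<lambda>p. X p - Y p) \<in> IDerP"

definition der_bracket :: "('k::comm_ring_1 pol \<Rightarrow> 'k pol) \<Rightarrow> ('k pol \<Rightarrow> 'k pol) \<Rightarrow> 'k pol \<Rightarrow> 'k pol" where
  "der_bracket X Y = (\<lambda>p. X (Y p) - Y (X p))"

text \<open>An element of Alt^2_A(Der(A),A), represented by a map on representatives
 omega : Der_I(P) x Der_I(P) -> P that is well defined modulo I Der(P) (inputs) and I (values),
 A-bilinear and alternating modulo I.\<close>
definition is_Alt2 :: "(('k::comm_ring_1 pol \<Rightarrow> 'k pol) \<Rightarrow> ('k pol \<Rightarrow> 'k pol) \<Rightarrow> 'k pol) \<Rightarrow> bool" where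
  "is_Alt2 \<omega> \<longleftrightarrow>
     (\<forall>X\<in>DerIP. \<forall>X'\<in>DerIP. \<forall>Y\<in>DerIP. der_eq X X' \<longrightarrow>
         inI (\<omega> X Y - \<omega> X' Y) \<and> inI (\<omega> Y X - \<omega> Y X'))
   \<and> (\<forall>X\<in>DerIP. \<forall>Y\<in>DerIP. \<forall>Z\<in>DerIP. \<forall>g h.
         inI (\<omega> (\<lambda>p. g * X p + h * Y p) Z - (g * \<omega> X Z + h * \<omega> Y Z)))
   \<and> (\<forall>X\<in>DerIP. inI (\<omega> X X))"

definition nondegenerate :: "(('k::comm_ring_1 pol \<Rightarrow> 'k pol) \<Rightarrow> ('k pol \<Rightarrow> 'k pol) \<Rightarrow> 'k pol) \<Rightarrow> bool" where
  "nondegenerate \<omega> \<longleftrightarrow>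
     (\<forall>X\<in>DerIP. (\<forall>Y\<in>DerIP. inI (\<omega> X Y)) \<longrightarrow> X \<in> IDerP)"

definition dR2 :: "(('k::comm_ring_1 pol \<Rightarrow> 'k pol) \<Rightarrow> ('k pol \<Rightarrow> 'k pol) \<Rightarrow> 'k pol)
     \<Rightarrow> ('k pol \<Rightarrow> 'k pol) \<Rightarrow> ('k pol \<Rightarrow> 'k pol) \<Rightarrow> ('k pol \<Rightarrow> 'k pol) \<Rightarrow> 'k pol" where
  "dR2 \<omega> X0 X1 X2 =
       X0 (\<omega> X1 X2) - X1 (\<omega> X0 X2) + X2 (\<omega> X0 X1)
     - \<omega> (der_bracket X0 X1) X2 + \<omega> (der_bracket X0 X2) X1 - \<omega> (der_bracket X1 X2) X0"

definition dR_closed :: "(('k::comm_ring_1 pol \<Rightarrow> 'k pol) \<Rightarrow> ('k pol \<Rightarrow> 'k pol) \<Rightarrow> 'k pol) \<Rightarrow> bool" where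
  "dR_closed \<omega> \<longleftrightarrow> (\<forall>X0\<in>DerIP. \<forall>X1\<in>DerIP. \<forall>X2\<in>DerIP. inI (dR2 \<omega> X0 X1 X2))"

end

theory Submission
  imports Defs
begin

text \<open>
  Condition (iii) forces \<open>\<omega> = - dx\<^sup>1 \<and> dx\<^sup>2 / (4 x\<^sup>3)\<close> on \<open>A\<close>. This division makes sense:
  \<open>x\<^sup>3\<close> is a non-zero-divisor modulo \<open>f\<close>, and for \<open>X, Y \<in> Der\<^sub>I(P)\<close> the value
  \<open>(dx\<^sup>1 \<and> dx\<^sup>2)(X, Y)\<close> lies in \<open>(x\<^sup>3) + I\<close>, because \<open>X(f) \<in> I\<close> forces
  \<open>X(x\<^sup>1) \<in> (x\<^sup>1, x\<^sup>3)\<close> and \<open>X(x\<^sup>2) \<in> (x\<^sup>2, x\<^sup>3)\<close>.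
  Condition (iii) itself is the identity \<open>4 x\<^sup>3 X(a) + (dx\<^sup>1 \<and> dx\<^sup>2)({a, _}, X) = -2 \<partial>\<^sub>3a X(f)\<close>,
  and non-degeneracy follows from it with \<open>a = x\<^sup>j\<close>.
  For closedness, \<open>dx\<^sup>1 \<and> dx\<^sup>2\<close> is exact, so \<open>d(4 x\<^sup>3 \<omega>) \<equiv> 0\<close>, i.e.
  \<open>4 x\<^sup>3 d\<omega> \<equiv> -4 dx\<^sup>3 \<and> \<omega>\<close>; multiplying by \<open>4 x\<^sup>3\<close> once more gives
  \<open>16 (x\<^sup>3)\<^sup>2 d\<omega> \<equiv> 4 dx\<^sup>3 \<and> dx\<^sup>1 \<and> dx\<^sup>2\<close>, and this 3-form vanishes on the surface since
  \<open>df = x\<^sup>2 dx\<^sup>1 + x\<^sup>1 dx\<^sup>2 - 2 x\<^sup>3 dx\<^sup>3 \<equiv> 0\<close>.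
\<close>

section \<open>Polynomials\<close>

text \<open>Any linear order on the variables orders the monomials, which is what the
  \<open>idom\<close> instance of \<^typ>\<open>'k pol\<close> in HOL-Library.Poly_Mapping requires.\<close>

instantiation var :: linorder
begin
definition less_eq_var :: "var \<Rightarrow> var \<Rightarrow> bool" where
  "less_eq_var a b \<longleftrightarrow> (case_var (0::nat) 1 2 a) \<le> case_var 0 1 2 b"
definition less_var :: "var \<Rightarrow> var \<Rightarrow> bool" where
  "less_var a b \<longleftrightarrow> (case_var (0::nat) 1 2 a) < case_var 0 1 2 b"
instance by standard (auto simp: less_eq_var_def less_var_def split: var.splits)
end

lemma update_eq_add_single:
  "k \<notin> Poly_Mapping.keys f \<Longrightarrow> Poly_Mapping.update k c f = f + Poly_Mapping.single k c"
  by (rule poly_mapping_eqI) (auto simp: lookup_update lookup_add lookup_single in_keys_iff when_def)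

lemma poly_mapping_induct [case_names zero single add]:
  fixes p :: "'a \<Rightarrow>\<^sub>0 'b::comm_monoid_add"
  assumes "P 0" and "\<And>m c. P (Poly_Mapping.single m c)" and "\<And>p q. P p \<Longrightarrow> P q \<Longrightarrow> P (p + q)"
  shows "P p"
  by (induction p rule: update_induct) (simp_all add: assms update_eq_add_single)

abbreviation unit_exp :: "var \<Rightarrow> var \<Rightarrow>\<^sub>0 nat" where
  "unit_exp v \<equiv> Poly_Mapping.single v 1"

lemma pderiv_var_eq_sum:
  assumes "finite S" "Poly_Mapping.keys p \<subseteq> S"
  shows "pderiv_var v p = (\<Sum>m\<in>S. Poly_Mapping.single (m - unit_exp v)
            (of_nat (Poly_Mapping.lookup m v) * Poly_Mapping.lookup p m))"
  unfolding pderiv_var_def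
  by (rule sum.mono_neutral_left[OF assms]) (auto simp: in_keys_iff)

lemma pderiv_var_zero [simp]: "pderiv_var v 0 = 0"
  by (simp add: pderiv_var_def)

lemma pderiv_var_single:
  "pderiv_var v (Poly_Mapping.single m c) =
     Poly_Mapping.single (m - unit_exp v) (of_nat (Poly_Mapping.lookup m v) * c)"
  by (subst pderiv_var_eq_sum[of "{m}"]) auto

lemma pderiv_var_add: "pderiv_var v (p + q) = pderiv_var v p + pderiv_var v q"
proof -
  let ?S = "Poly_Mapping.keys p \<union> Poly_Mapping.keys q \<union> Poly_Mapping.keys (p + q)"
  have "finite ?S" "Poly_Mapping.keys p \<subseteq> ?S" "Poly_Mapping.keys q \<subseteq> ?S" "Poly_Mapping.keys (p + q) \<subseteq> ?S"
    by auto
  then show ?thesis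
    by (simp add: pderiv_var_eq_sum[of ?S] lookup_add distrib_left single_add sum.distrib)
qed

lemma pderiv_var_uminus: "pderiv_var v (- p) = - pderiv_var v p"
  using pderiv_var_add[of v p "- p"] by (simp add: eq_neg_iff_add_eq_0 add.commute)

lemma pderiv_var_mult_single:
  fixes a b :: "'k::comm_ring_1"
  shows "pderiv_var v (Poly_Mapping.single m a * Poly_Mapping.single n b) =
    Poly_Mapping.single m a * pderiv_var v (Poly_Mapping.single n b) +
    Poly_Mapping.single n b * pderiv_var v (Poly_Mapping.single m a)"
proof -
  have shift: "Poly_Mapping.single n b * Poly_Mapping.single (m - unit_exp v) (of_nat (Poly_Mapping.lookup m v) * a)
      = Poly_Mapping.single (m + n - unit_exp v) (of_nat (Poly_Mapping.lookup m v) * a * b)"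
    for m n :: "var \<Rightarrow>\<^sub>0 nat" and a b :: 'k
  proof (cases "Poly_Mapping.lookup m v = 0")
    case False
    then have "n + (m - unit_exp v) = m + n - unit_exp v"
      by (intro poly_mapping_eqI) (auto simp: lookup_add lookup_minus lookup_single when_def)
    then show ?thesis by (simp add: mult_single ac_simps)
  qed simp
  have "pderiv_var v (Poly_Mapping.single m a * Poly_Mapping.single n b)
      = Poly_Mapping.single (m + n - unit_exp v) (of_nat (Poly_Mapping.lookup n v) * b * a)
      + Poly_Mapping.single (m + n - unit_exp v) (of_nat (Poly_Mapping.lookup m v) * a * b)"
    by (simp add: mult_single pderiv_var_single lookup_add algebra_simps flip: single_add)
  then show ?thesis
    using shift[where m = n and n = m and a = b and b = a] shift[where m = m and n = n and a = a and b = b]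
    by (simp add: pderiv_var_single add.commute)
qed

lemma pderiv_var_mult:
  "pderiv_var v ((p::'k::comm_ring_1 pol) * q) = p * pderiv_var v q + q * pderiv_var v p"
proof (induction p rule: poly_mapping_induct)
  case (single m c)
  show ?case
  proof (induction q rule: poly_mapping_induct)
    case (single n d)
    show ?case by (rule pderiv_var_mult_single)
  next
    case (add q1 q2)
    then show ?case by (simp add: pderiv_var_add algebra_simps)
  qed simp
next
  case (add p1 p2)
  then show ?case by (simp add: pderiv_var_add algebra_simps)
qed simp

lemma pconst_mult_single: "pconst c * Poly_Mapping.single m d = Poly_Mapping.single m (c * d)"
  by (simp add: pconst_def mult_single)

lemma pconst_mult: "pconst a * pconst b = pconst (a * b)"
  by (simp add: pconst_def mult_single)

lemma pconst_0 [simp]: "pconst 0 = 0"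
  and pconst_1 [simp]: "pconst 1 = 1"
  and pconst_numeral [simp]: "pconst (numeral n) = numeral n"
  by (simp_all add: pconst_def)

lemma numeral_mult_pconst_inverse: "numeral n * pconst (1 / numeral n) = (1 :: 'k::field_char_0 pol)"
  by (simp add: pconst_mult flip: pconst_numeral)

lemma pderiv_var_pconst [simp]: "pderiv_var v (pconst c) = 0"
  by (simp add: pconst_def pderiv_var_single)

lemma pderiv_var_pconst_mult: "pderiv_var v (pconst c * p) = pconst c * pderiv_var v p"
  by (simp add: pderiv_var_mult)

lemma pderiv_var_pvar: "pderiv_var v (pvar w :: 'k::comm_ring_1 pol) = (if v = w then 1 else 0)"
  by (auto simp: pvar_def pderiv_var_single lookup_single)

lemma monomial_decomp:
  "(m::var \<Rightarrow>\<^sub>0 nat) = Poly_Mapping.single V1 (Poly_Mapping.lookup m V1)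
     + Poly_Mapping.single V2 (Poly_Mapping.lookup m V2) + Poly_Mapping.single V3 (Poly_Mapping.lookup m V3)"
  (is "_ = ?rhs")
proof (rule poly_mapping_eqI)
  show "Poly_Mapping.lookup m v = Poly_Mapping.lookup ?rhs v" for v
    by (cases v) (simp_all add: lookup_add lookup_single)
qed

lemma single_single_eq_pvar_power:
  "Poly_Mapping.single (Poly_Mapping.single v k) (1::'k::comm_ring_1) = pvar v ^ k"
proof (induction k)
  case (Suc k)
  have "Poly_Mapping.single (Poly_Mapping.single v (Suc k)) (1::'k)
      = pvar v * Poly_Mapping.single (Poly_Mapping.single v k) 1"
    by (simp add: pvar_def mult_single flip: single_add)
  with Suc show ?case by simp
qed simp

lemma pol_induct [case_names const var add mult]:
  fixes p :: "'k::comm_ring_1 pol"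
  assumes P_const: "\<And>c. P (pconst c)" and P_var: "\<And>v. P (pvar v)"
    and P_add: "\<And>p q. P p \<Longrightarrow> P q \<Longrightarrow> P (p + q)"
    and P_mult: "\<And>p q. P p \<Longrightarrow> P q \<Longrightarrow> P (p * q)"
  shows "P p"
proof (induction p rule: poly_mapping_induct)
  case zero
  show ?case using P_const[of 0] by simp
next
  case (add p q)
  then show ?case by (rule P_add)
next
  case (single m c)
  have power: "P (pvar v ^ k)" for v k
    by (induction k) (use P_const[of 1] P_var P_mult in simp_all)
  have "Poly_Mapping.single m c = pconst c *
      (Poly_Mapping.single (Poly_Mapping.single V1 (Poly_Mapping.lookup m V1)) 1 *
       Poly_Mapping.single (Poly_Mapping.single V2 (Poly_Mapping.lookup m V2)) 1 *
       Poly_Mapping.single (Poly_Mapping.single V3 (Poly_Mapping.lookup m V3)) 1)"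
    by (subst monomial_decomp) (simp add: mult_single pconst_mult_single)
  then show ?case using power P_const P_mult by (simp add: single_single_eq_pvar_power)
qed

section \<open>Derivations\<close>

context
  fixes D :: "'k::comm_ring_1 pol \<Rightarrow> 'k pol"
  assumes D: "D \<in> DerP"
begin

lemma DerP_add: "D (p + q) = D p + D q"
  and DerP_pconst_mult: "D (pconst c * p) = pconst c * D p"
  and DerP_mult: "D (p * q) = p * D q + q * D p"
  using D by (auto simp: DerP_def)

lemma DerP_zero: "D 0 = 0"
  using DerP_add[of 0 0] by simp

lemma DerP_uminus: "D (- p) = - D p"
  using DerP_add[of p "- p"] by (simp add: DerP_zero eq_neg_iff_add_eq_0 add.commute)

lemma DerP_diff: "D (p - q) = D p - D q"
  by (simp only: diff_conv_add_uminus DerP_add DerP_uminus)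

lemma DerP_pconst: "D (pconst c) = 0"
  using DerP_pconst_mult[of c 1] DerP_mult[of 1 1] by simp

lemma DerP_numeral_mult: "D (numeral n * p) = numeral n * D p"
  using DerP_pconst_mult[of "numeral n" p] by simp

lemma DerP_chain_rule:
  "D p = pderiv_var V1 p * D (pvar V1) + pderiv_var V2 p * D (pvar V2) + pderiv_var V3 p * D (pvar V3)"
proof (induction p rule: pol_induct)
  case (const c)
  then show ?case by (simp add: DerP_pconst)
next
  case (var v)
  then show ?case by (cases v) (simp_all add: pderiv_var_pvar)
next
  case (add p q)
  then show ?case by (simp add: DerP_add pderiv_var_add algebra_simps)
next
  case (mult p q)
  then show ?case by (simp add: DerP_mult pderiv_var_mult algebra_simps)
qed

lemma DerP_fpol: "D fpol = pvar V2 * D (pvar V1) + pvar V1 * D (pvar V2) - 2 * pvar V3 * D (pvar V3)"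
  by (simp add: fpol_def DerP_diff DerP_mult algebra_simps)

end

definition vector_field :: "'k::comm_ring_1 pol \<Rightarrow> 'k pol \<Rightarrow> 'k pol \<Rightarrow> 'k pol \<Rightarrow> 'k pol" where
  "vector_field y1 y2 y3 = (\<lambda>p. pderiv_var V1 p * y1 + pderiv_var V2 p * y2 + pderiv_var V3 p * y3)"

lemma vector_field_DerP: "vector_field y1 y2 y3 \<in> DerP"
  unfolding DerP_def vector_field_def
  by (auto simp: pderiv_var_add pderiv_var_mult pderiv_var_pconst_mult algebra_simps)

lemma vector_field_pvar [simp]:
  "vector_field y1 y2 y3 (pvar V1) = y1"
  "vector_field y1 y2 y3 (pvar V2) = y2"
  "vector_field y1 y2 y3 (pvar V3) = y3"
  by (simp_all add: vector_field_def pderiv_var_pvar)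

section \<open>The ideal \<open>I\<close>\<close>

lemma inI_0 [simp]: "inI 0"
  and inI_fpol_mult: "inI (fpol * q)"
  and inI_add: "inI p \<Longrightarrow> inI q \<Longrightarrow> inI (p + q)"
  and inI_diff: "inI p \<Longrightarrow> inI q \<Longrightarrow> inI (p - q)"
  and inI_uminus: "inI p \<Longrightarrow> inI (- p)"
  and inI_mult_left: "inI p \<Longrightarrow> inI (q * p)"
  and inI_mult_right: "inI p \<Longrightarrow> inI (p * q)"
  by (simp_all add: inI_def)

lemma DerIP_DerP: "X \<in> DerIP \<Longrightarrow> X \<in> DerP"
  and DerIP_inI: "X \<in> DerIP \<Longrightarrow> inI p \<Longrightarrow> inI (X p)"
  by (simp_all add: DerIP_def)

lemma vector_field_DerIP:
  assumes "inI (pvar V2 * y1 + pvar V1 * y2 - 2 * pvar V3 * y3)"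
  shows "vector_field y1 y2 y3 \<in> DerIP"
proof -
  have D: "vector_field y1 y2 y3 \<in> DerP" by (rule vector_field_DerP)
  have "inI (vector_field y1 y2 y3 (fpol * r))" for r
    using assms by (simp add: DerP_mult[OF D] DerP_fpol[OF D] inI_add inI_fpol_mult inI_mult_left)
  with D show ?thesis by (auto simp: DerIP_def inI_def)
qed

lemma DerP_in_IDerP:
  assumes "D \<in> DerP" and "\<And>v. inI (D (pvar v))"
  shows "D \<in> IDerP"
proof -
  obtain g where g: "\<And>v. D (pvar v) = fpol * g v"
    using assms(2) unfolding inI_def dvd_def by metis
  have "\<forall>p. D p = fpol * vector_field (g V1) (g V2) (g V3) p"
    using DerP_chain_rule[OF assms(1)] by (simp add: g vector_field_def algebra_simps)
  then show ?thesis unfolding IDerP_def using vector_field_DerP by blast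
qed

lemma der_bracket_DerIP:
  assumes "X \<in> DerIP" "Y \<in> DerIP"
  shows "der_bracket X Y \<in> DerIP"
proof -
  have X: "X \<in> DerP" and Y: "Y \<in> DerP" using assms by (auto simp: DerIP_def)
  have "der_bracket X Y \<in> DerP"
    unfolding DerP_def der_bracket_def
    by (auto simp: DerP_add[OF X] DerP_add[OF Y] DerP_mult[OF X] DerP_mult[OF Y]
        DerP_pconst_mult[OF X] DerP_pconst_mult[OF Y] DerP_diff[OF X] DerP_diff[OF Y]
        DerP_pconst[OF X] DerP_pconst[OF Y] algebra_simps)
  with assms show ?thesis
    by (auto simp: DerIP_def der_bracket_def intro: inI_diff)
qed

lemma ham_DerIP: "ham a \<in> DerIP"
proof -
  have "ham a = vector_field (pbr a (pvar V1)) (pbr a (pvar V2)) (pbr a (pvar V3))"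
    by (rule ext) (simp add: ham_def vector_field_def pbr_def pderiv_var_pvar algebra_simps)
  also have "\<dots> \<in> DerIP"
    by (rule vector_field_DerIP) (simp add: pbr_def pderiv_var_pvar algebra_simps)
  finally show ?thesis .
qed

lemma DerIP_fpol:
  "X \<in> DerIP \<Longrightarrow> inI (pvar V2 * X (pvar V1) + pvar V1 * X (pvar V2) - 2 * pvar V3 * X (pvar V3))"
  by (metis DerIP_DerP DerIP_inI DerP_fpol dvd_refl inI_def)

section \<open>Divisibility by the variables\<close>

definition var_free :: "var \<Rightarrow> 'k::comm_ring_1 pol \<Rightarrow> bool" where
  "var_free v p \<longleftrightarrow> (\<forall>m\<in>Poly_Mapping.keys p. Poly_Mapping.lookup m v = 0)"

lemma var_free_add: "var_free v p \<Longrightarrow> var_free v q \<Longrightarrow> var_free v (p + q)"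
  using keys_add[of p q] unfolding var_free_def by blast

lemma var_free_diff: "var_free v p \<Longrightarrow> var_free v q \<Longrightarrow> var_free v (p - q)"
  using keys_add[of p "- q"] by (auto simp: var_free_def in_keys_iff)

lemma var_free_mult: "var_free v p \<Longrightarrow> var_free v q \<Longrightarrow> var_free v (p * q)"
  using keys_mult[of p q] unfolding var_free_def by (force simp: lookup_add)

lemma var_free_pvar: "w \<noteq> v \<Longrightarrow> var_free v (pvar w)"
  by (simp add: var_free_def pvar_def lookup_single)

lemma pvar_neq_zero: "pvar v \<noteq> (0::'k::comm_ring_1 pol)"
  unfolding pvar_def by (metis lookup_single_eq lookup_zero one_neq_zero)

lemma pol_split_var: "\<exists>p0 p1. (p::'k::comm_ring_1 pol) = p0 + pvar v * p1 \<and> var_free v p0"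
proof (induction p rule: poly_mapping_induct)
  case zero
  show ?case by (intro exI[of _ 0]) (simp add: var_free_def)
next
  case (single m c)
  show ?case
  proof (cases "Poly_Mapping.lookup m v = 0")
    case True
    then show ?thesis
      by (intro exI[of _ "Poly_Mapping.single m c"] exI[of _ 0]) (simp add: var_free_def)
  next
    case False
    then have "unit_exp v + (m - unit_exp v) = m"
      by (intro poly_mapping_eqI) (auto simp: lookup_add lookup_minus lookup_single when_def)
    then have "Poly_Mapping.single m c = pvar v * Poly_Mapping.single (m - unit_exp v) c"
      by (simp add: pvar_def mult_single)
    then show ?thesis
      by (intro exI[of _ 0] exI[of _ "Poly_Mapping.single (m - unit_exp v) c"]) (simp add: var_free_def)
  qed
next
  case (add p q)
  then obtain p0 p1 q0 q1
    where "p = p0 + pvar v * p1" "var_free v p0" "q = q0 + pvar v * q1" "var_free v q0"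
    by blast
  then show ?case
    by (intro exI[of _ "p0 + q0"] exI[of _ "p1 + q1"]) (simp add: var_free_add algebra_simps)
qed

lemma var_free_pvar_mult:
  fixes r :: "'k::comm_ring_1 pol"
  assumes "var_free v (pvar v * r)"
  shows "pvar v * r = 0"
proof -
  have "Poly_Mapping.lookup m v \<noteq> 0" if "m \<in> Poly_Mapping.keys (pvar v * r)" for m
  proof -
    from that keys_mult[of "pvar v" r] obtain a b
      where "m = a + b" "a \<in> Poly_Mapping.keys (pvar v :: 'k pol)"
      by blast
    then show ?thesis by (simp add: pvar_def lookup_add)
  qed
  with assms have "Poly_Mapping.keys (pvar v * r) = {}" unfolding var_free_def by blast
  then show ?thesis by simp
qed

lemma pvar_coeff_in_ideal:
  fixes A B c r :: "'k::idom pol"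
  assumes "distinct [u, w, z]"
    and rel: "pvar u * A + pvar w * B = pvar u * pvar w * c + pvar z * r"
  shows "\<exists>a b. A = pvar w * a + pvar z * b"
proof -
  obtain A0 A1 where A: "A = A0 + pvar z * A1" "var_free z A0" using pol_split_var by blast
  obtain B0 B1 where B: "B = B0 + pvar z * B1" "var_free z B0" using pol_split_var by blast
  obtain c0 c1 where c: "c = c0 + pvar z * c1" "var_free z c0" using pol_split_var by blast
  have "pvar u * A0 + pvar w * B0 - pvar u * pvar w * c0 =
      pvar z * (r + pvar u * pvar w * c1 - pvar u * A1 - pvar w * B1)"
    using rel A(1) B(1) c(1) by algebra
  moreover have "var_free z (pvar u * A0 + pvar w * B0 - pvar u * pvar w * c0)"
    using A(2) B(2) c(2) assms(1)
    by (intro var_free_diff var_free_add var_free_mult var_free_pvar) auto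
  ultimately have rel0: "pvar u * A0 + pvar w * B0 - pvar u * pvar w * c0 = 0"
    using var_free_pvar_mult by metis
  obtain A00 A01 where A0: "A0 = A00 + pvar w * A01" "var_free w A00" using pol_split_var by blast
  have "pvar u * A00 = pvar w * (pvar u * c0 - B0 - pvar u * A01)"
    using rel0 A0(1) by algebra
  moreover have "var_free w (pvar u * A00)"
    using A0(2) assms(1) by (intro var_free_mult var_free_pvar) auto
  ultimately have "A00 = 0"
    using var_free_pvar_mult pvar_neq_zero by (metis mult_eq_0_iff)
  with A A0 have "A = pvar w * A01 + pvar z * A1" by simp
  then show ?thesis by blast
qed

lemma inI_cancel_pvar3:
  fixes q :: "'k::idom pol"
  assumes "inI (pvar V3 * q)"
  shows "inI q"
proof -
  from assms obtain g where g: "pvar V3 * q = fpol * g" by (auto simp: inI_def)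
  obtain g0 g1 where G: "g = g0 + pvar V3 * g1" "var_free V3 g0" using pol_split_var by blast
  have "pvar V1 * pvar V2 * g0 = pvar V3 * (q - fpol * g1 + pvar V3 * g0)"
    using g G(1) unfolding fpol_def by algebra
  moreover have "var_free V3 (pvar V1 * pvar V2 * g0)"
    using G(2) by (intro var_free_mult var_free_pvar) auto
  ultimately have "g0 = 0"
    using var_free_pvar_mult pvar_neq_zero by (metis mult_eq_0_iff)
  with g G have "pvar V3 * q = pvar V3 * (fpol * g1)" by (simp add: algebra_simps)
  then show ?thesis by (simp add: pvar_neq_zero inI_fpol_mult)
qed

lemma inI_cancel_numeral_pvar3:
  fixes q :: "'k::field_char_0 pol"
  assumes "inI (numeral n * pvar V3 * q)"
  shows "inI q"
proof -
  have "pvar V3 * q = pconst (1 / numeral n) * (numeral n * pvar V3 * q)"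
    using numeral_mult_pconst_inverse[of n, where 'k='k] by (simp add: ac_simps)
  then show ?thesis
    using assms by (metis inI_mult_left inI_cancel_pvar3)
qed

text \<open>Geometrically: every derivation of \<open>A\<close> preserves the ideals of the two lines
  \<open>x\<^sup>1 = x\<^sup>3 = 0\<close> and \<open>x\<^sup>2 = x\<^sup>3 = 0\<close> lying on the cone.\<close>

lemma DerIP_pvar_components:
  fixes X :: "'k::idom pol \<Rightarrow> 'k pol"
  assumes "X \<in> DerIP"
  obtains a b a' b' where "X (pvar V1) = pvar V1 * a + pvar V3 * b"
    and "X (pvar V2) = pvar V2 * a' + pvar V3 * b'"
proof -
  from DerIP_fpol[OF assms] obtain c where
    "pvar V2 * X (pvar V1) + pvar V1 * X (pvar V2) - 2 * pvar V3 * X (pvar V3) = fpol * c"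
    by (auto simp: inI_def)
  then have "pvar V2 * X (pvar V1) + pvar V1 * X (pvar V2)
      = pvar V2 * pvar V1 * c + pvar V3 * (2 * X (pvar V3) - pvar V3 * c)"
    and "pvar V1 * X (pvar V2) + pvar V2 * X (pvar V1)
      = pvar V1 * pvar V2 * c + pvar V3 * (2 * X (pvar V3) - pvar V3 * c)"
    unfolding fpol_def by algebra+
  then show ?thesis
    using that pvar_coeff_in_ideal[of V2 V1 V3] pvar_coeff_in_ideal[of V1 V2 V3] by fastforce
qed

section \<open>Differential forms\<close>

text \<open>Evaluated on representatives, \<open>dd_wedge p q\<close> is \<open>dp \<and> dq\<close> and \<open>d_wedge h \<omega>\<close> is \<open>dh \<and> \<omega>\<close>.\<close>

definition dd_wedge :: "'k::comm_ring_1 pol \<Rightarrow> 'k pol \<Rightarrow> ('k pol \<Rightarrow> 'k pol) \<Rightarrow> ('k pol \<Rightarrow> 'k pol) \<Rightarrow> 'k pol"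
  where "dd_wedge p q X Y = X p * Y q - X q * Y p"

definition d_wedge :: "'k::comm_ring_1 pol \<Rightarrow> (('k pol \<Rightarrow> 'k pol) \<Rightarrow> ('k pol \<Rightarrow> 'k pol) \<Rightarrow> 'k pol)
    \<Rightarrow> ('k pol \<Rightarrow> 'k pol) \<Rightarrow> ('k pol \<Rightarrow> 'k pol) \<Rightarrow> ('k pol \<Rightarrow> 'k pol) \<Rightarrow> 'k pol"
  where "d_wedge h \<omega> X0 X1 X2 = X0 h * \<omega> X1 X2 - X1 h * \<omega> X0 X2 + X2 h * \<omega> X0 X1"

abbreviation dx1_dx2 :: "('k::comm_ring_1 pol \<Rightarrow> 'k pol) \<Rightarrow> ('k pol \<Rightarrow> 'k pol) \<Rightarrow> 'k pol" where
  "dx1_dx2 \<equiv> dd_wedge (pvar V1) (pvar V2)"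

context
  fixes X0 X1 X2 :: "'k::comm_ring_1 pol \<Rightarrow> 'k pol"
  assumes X0: "X0 \<in> DerP" and X1: "X1 \<in> DerP" and X2: "X2 \<in> DerP"
begin

lemma dR2_add: "dR2 (\<lambda>X Y. \<omega> X Y + \<eta> X Y) X0 X1 X2 = dR2 \<omega> X0 X1 X2 + dR2 \<eta> X0 X1 X2"
  by (simp add: dR2_def DerP_add[OF X0] DerP_add[OF X1] DerP_add[OF X2])

lemma dR2_mult_left:
  "dR2 (\<lambda>X Y. h * \<omega> X Y) X0 X1 X2 = h * dR2 \<omega> X0 X1 X2 + d_wedge h \<omega> X0 X1 X2"
  by (simp add: dR2_def d_wedge_def DerP_mult[OF X0] DerP_mult[OF X1] DerP_mult[OF X2] algebra_simps)

lemma dR2_dd_wedge: "dR2 (dd_wedge p q) X0 X1 X2 = 0"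
  by (simp add: dR2_def dd_wedge_def der_bracket_def DerP_diff[OF X0] DerP_diff[OF X1] DerP_diff[OF X2]
      DerP_mult[OF X0] DerP_mult[OF X1] DerP_mult[OF X2] algebra_simps)

lemma d_wedge_numeral_mult: "d_wedge (numeral n * h) \<omega> X0 X1 X2 = numeral n * d_wedge h \<omega> X0 X1 X2"
  by (simp add: d_wedge_def DerP_numeral_mult[OF X0] DerP_numeral_mult[OF X1] DerP_numeral_mult[OF X2])

end

lemma dR2_inI:
  assumes \<nu>: "\<And>X Y. X \<in> DerIP \<Longrightarrow> Y \<in> DerIP \<Longrightarrow> inI (\<nu> X Y)"
    and X: "X0 \<in> DerIP" "X1 \<in> DerIP" "X2 \<in> DerIP"
  shows "inI (dR2 \<nu> X0 X1 X2)"
proof -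
  have "inI (X0 (\<nu> X1 X2))" "inI (X1 (\<nu> X0 X2))" "inI (X2 (\<nu> X0 X1))"
    by (rule DerIP_inI[OF X(1) \<nu>[OF X(2,3)]] DerIP_inI[OF X(2) \<nu>[OF X(1,3)]] DerIP_inI[OF X(3) \<nu>[OF X(1,2)]])+
  moreover have "inI (\<nu> (der_bracket X0 X1) X2)" "inI (\<nu> (der_bracket X0 X2) X1)"
    "inI (\<nu> (der_bracket X1 X2) X0)"
    using X by (simp_all add: \<nu> der_bracket_DerIP)
  ultimately show ?thesis unfolding dR2_def by (simp add: inI_add inI_diff)
qed

lemma d_wedge_inI:
  assumes \<nu>: "\<And>X Y. X \<in> DerIP \<Longrightarrow> Y \<in> DerIP \<Longrightarrow> inI (\<nu> X Y)"
    and X: "X0 \<in> DerIP" "X1 \<in> DerIP" "X2 \<in> DerIP"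
  shows "inI (d_wedge h \<nu> X0 X1 X2)"
  unfolding d_wedge_def using X by (simp add: \<nu> inI_add inI_diff inI_mult_left)

text \<open>Since every \<open>X\<^sub>i(f) \<in> I\<close>, the form \<open>df \<and> dx\<^sup>1 \<and> dx\<^sup>2 = -2 x\<^sup>3 dx\<^sup>3 \<and> dx\<^sup>1 \<and> dx\<^sup>2\<close>
  vanishes on the surface.\<close>

lemma d_wedge_pvar3_dx1_dx2_inI:
  fixes X0 :: "'k::field_char_0 pol \<Rightarrow> 'k pol"
  assumes X: "X0 \<in> DerIP" "X1 \<in> DerIP" "X2 \<in> DerIP"
  shows "inI (d_wedge (pvar V3) dx1_dx2 X0 X1 X2)"
proof -
  have "inI (d_wedge fpol dx1_dx2 X0 X1 X2)"
    unfolding d_wedge_def using X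
    by (intro inI_add inI_diff inI_mult_right) (simp_all add: DerIP_fpol DerP_fpol DerIP_DerP)
  also have "d_wedge fpol dx1_dx2 X0 X1 X2 = - (2 * pvar V3 * d_wedge (pvar V3) dx1_dx2 X0 X1 X2)"
    using X by (simp add: d_wedge_def dd_wedge_def DerP_fpol DerIP_DerP) algebra
  finally have "inI (2 * pvar V3 * d_wedge (pvar V3) dx1_dx2 X0 X1 X2)"
    by (metis inI_uminus minus_minus)
  then show ?thesis by (rule inI_cancel_numeral_pvar3)
qed

section \<open>The symplectic form\<close>

definition symp_form :: "('k::comm_ring_1 pol \<Rightarrow> 'k pol) \<Rightarrow> ('k pol \<Rightarrow> 'k pol) \<Rightarrow> 'k pol" where
  "symp_form X Y = (SOME q. inI (4 * pvar V3 * q + dx1_dx2 X Y))"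

lemma symp_form_exists:
  fixes X Y :: "'k::field_char_0 pol \<Rightarrow> 'k pol"
  assumes "X \<in> DerIP" "Y \<in> DerIP"
  shows "\<exists>q. inI (4 * pvar V3 * q + dx1_dx2 X Y)"
proof -
  obtain a b a' b' where X: "X (pvar V1) = pvar V1 * a + pvar V3 * b" "X (pvar V2) = pvar V2 * a' + pvar V3 * b'"
    using DerIP_pvar_components[OF assms(1)] by blast
  obtain c d c' d' where Y: "Y (pvar V1) = pvar V1 * c + pvar V3 * d" "Y (pvar V2) = pvar V2 * c' + pvar V3 * d'"
    using DerIP_pvar_components[OF assms(2)] by blast
  \<comment> \<open>\<open>M\<close> is the \<open>x\<^sup>3\<close>-part of \<open>dx\<^sup>1 \<and> dx\<^sup>2 (X, Y)\<close> after replacing \<open>x\<^sup>1 x\<^sup>2\<close> by \<open>f + (x\<^sup>3)\<^sup>2\<close>.\<close>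
  define M where "M = pvar V3 * a * c' + pvar V1 * a * d' + pvar V2 * b * c' + pvar V3 * b * d'
      - (pvar V3 * a' * c + pvar V2 * a' * d + pvar V1 * b' * c + pvar V3 * b' * d)"
  have "4 * pconst (1/4) = (1 :: 'k pol)" by (rule numeral_mult_pconst_inverse)
  then have "4 * pvar V3 * (- (pconst (1/4) * M)) + dx1_dx2 X Y = fpol * (a * c' - a' * c)"
    unfolding dd_wedge_def X Y M_def fpol_def by algebra
  then show ?thesis by (metis inI_fpol_mult)
qed

lemma symp_form_unique:
  fixes q :: "'k::field_char_0 pol"
  assumes "inI (4 * pvar V3 * q + dx1_dx2 X Y)"
  shows "inI (symp_form X Y - q)"
proof -
  have "inI (4 * pvar V3 * symp_form X Y + dx1_dx2 X Y)"
    unfolding symp_form_def using assms by (rule someI)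
  then have "inI ((4 * pvar V3 * symp_form X Y + dx1_dx2 X Y) - (4 * pvar V3 * q + dx1_dx2 X Y))"
    using assms by (rule inI_diff)
  then have "inI (4 * pvar V3 * (symp_form X Y - q))" by (simp add: algebra_simps)
  then show ?thesis by (rule inI_cancel_numeral_pvar3)
qed

lemma symp_form_inI:
  fixes X Y :: "'k::field_char_0 pol \<Rightarrow> 'k pol"
  assumes "X \<in> DerIP" "Y \<in> DerIP"
  shows "inI (4 * pvar V3 * symp_form X Y + dx1_dx2 X Y)"
  unfolding symp_form_def using symp_form_exists[OF assms] by (rule someI_ex)

lemma symp_form_ham:
  fixes a :: "'k::field_char_0 pol"
  assumes X: "X \<in> DerIP"
  shows "inI (symp_form (ham a) X - X a)"
proof (rule symp_form_unique)
  have "4 * pvar V3 * X a + dx1_dx2 (ham a) X = - 2 * pderiv_var V3 a *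
      (pvar V2 * X (pvar V1) + pvar V1 * X (pvar V2) - 2 * pvar V3 * X (pvar V3))"
    unfolding DerP_chain_rule[OF DerIP_DerP[OF X], of a]
    by (simp add: dd_wedge_def ham_def pbr_def pderiv_var_pvar algebra_simps)
  then show "inI (4 * pvar V3 * X a + dx1_dx2 (ham a) X)"
    using DerIP_fpol[OF X] by (simp add: inI_mult_left inI_uminus)
qed

lemma symp_form_antisym:
  fixes X Y :: "'k::field_char_0 pol \<Rightarrow> 'k pol"
  assumes "X \<in> DerIP" "Y \<in> DerIP"
  shows "inI (symp_form X Y + symp_form Y X)"
proof -
  have "inI ((4 * pvar V3 * symp_form X Y + dx1_dx2 X Y) + (4 * pvar V3 * symp_form Y X + dx1_dx2 Y X))"
    using symp_form_inI[OF assms] symp_form_inI[OF assms(2,1)] by (rule inI_add)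
  then have "inI (4 * pvar V3 * (symp_form X Y + symp_form Y X))"
    by (simp add: dd_wedge_def algebra_simps)
  then show ?thesis by (rule inI_cancel_numeral_pvar3)
qed

lemma symp_form_Alt2: "is_Alt2 (symp_form :: ('k::field_char_0 pol \<Rightarrow> 'k pol) \<Rightarrow> _)"
  unfolding is_Alt2_def
proof (intro conjI ballI allI impI)
  fix X X' Y :: "'k pol \<Rightarrow> 'k pol"
  assume X: "X \<in> DerIP" and X': "X' \<in> DerIP" and Y: "Y \<in> DerIP" and "der_eq X X'"
  then obtain D where D: "\<And>p. X p = X' p + fpol * D p"
    by (auto simp: der_eq_def IDerP_def algebra_simps)
  have "4 * pvar V3 * symp_form X' Y + dx1_dx2 X Y = (4 * pvar V3 * symp_form X' Y + dx1_dx2 X' Y)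
      + fpol * (D (pvar V1) * Y (pvar V2) - D (pvar V2) * Y (pvar V1))"
    unfolding dd_wedge_def D by algebra
  then show "inI (symp_form X Y - symp_form X' Y)"
    using symp_form_inI[OF X' Y] by (metis symp_form_unique inI_add inI_fpol_mult)
  have "4 * pvar V3 * symp_form Y X' + dx1_dx2 Y X = (4 * pvar V3 * symp_form Y X' + dx1_dx2 Y X')
      + fpol * (Y (pvar V1) * D (pvar V2) - Y (pvar V2) * D (pvar V1))"
    unfolding dd_wedge_def D by algebra
  then show "inI (symp_form Y X - symp_form Y X')"
    using symp_form_inI[OF Y X'] by (metis symp_form_unique inI_add inI_fpol_mult)
next
  fix X Y Z :: "'k pol \<Rightarrow> 'k pol" and g h :: "'k pol"
  assume X: "X \<in> DerIP" and Y: "Y \<in> DerIP" and Z: "Z \<in> DerIP"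
  let ?XY = "\<lambda>p. g * X p + h * Y p"
  have "4 * pvar V3 * (g * symp_form X Z + h * symp_form Y Z) + dx1_dx2 ?XY Z
     = g * (4 * pvar V3 * symp_form X Z + dx1_dx2 X Z) + h * (4 * pvar V3 * symp_form Y Z + dx1_dx2 Y Z)"
    unfolding dd_wedge_def by algebra
  then have "inI (4 * pvar V3 * (g * symp_form X Z + h * symp_form Y Z) + dx1_dx2 ?XY Z)"
    using symp_form_inI[OF X Z] symp_form_inI[OF Y Z] by (simp add: inI_add inI_mult_left)
  then show "inI (symp_form ?XY Z - (g * symp_form X Z + h * symp_form Y Z))"
    by (rule symp_form_unique)
next
  fix X :: "'k pol \<Rightarrow> 'k pol"
  have "inI (4 * pvar V3 * 0 + dx1_dx2 X X)" by (simp add: dd_wedge_def mult.commute)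
  from symp_form_unique[OF this] show "inI (symp_form X X)" by simp
qed

lemma symp_form_nondegenerate: "nondegenerate (symp_form :: ('k::field_char_0 pol \<Rightarrow> 'k pol) \<Rightarrow> _)"
  unfolding nondegenerate_def
proof (intro ballI impI)
  fix X :: "'k pol \<Rightarrow> 'k pol"
  assume X: "X \<in> DerIP" and degenerate: "\<forall>Y\<in>DerIP. inI (symp_form X Y)"
  have "inI (X (pvar v))" for v
  proof -
    let ?H = "ham (pvar v) :: 'k pol \<Rightarrow> 'k pol"
    have "inI (symp_form X ?H)" using degenerate ham_DerIP by blast
    with symp_form_antisym[OF X ham_DerIP] symp_form_ham[OF X]
    have "inI ((symp_form X ?H + symp_form ?H X) - symp_form X ?H - (symp_form ?H X - X (pvar v)))"
      by (metis inI_diff)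
    then show ?thesis by simp
  qed
  then show "X \<in> IDerP" by (rule DerP_in_IDerP[OF DerIP_DerP[OF X]])
qed

lemma symp_form_closed: "dR_closed (symp_form :: ('k::field_char_0 pol \<Rightarrow> 'k pol) \<Rightarrow> _)"
  unfolding dR_closed_def
proof (intro ballI)
  fix X0 X1 X2 :: "'k pol \<Rightarrow> 'k pol"
  assume X: "X0 \<in> DerIP" "X1 \<in> DerIP" "X2 \<in> DerIP"
  then have D: "X0 \<in> DerP" "X1 \<in> DerP" "X2 \<in> DerP" by (simp_all add: DerIP_DerP)
  define h :: "'k pol" where "h = 4 * pvar V3"
  define \<nu> where "\<nu> = (\<lambda>X Y. h * symp_form X Y + dx1_dx2 X Y)"
  have \<nu>_inI: "inI (\<nu> X Y)" if "X \<in> DerIP" "Y \<in> DerIP" for X Y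
    using symp_form_inI[OF that] by (simp add: \<nu>_def h_def)
  let ?d\<omega> = "dR2 symp_form X0 X1 X2" and ?dh_\<omega> = "d_wedge h symp_form X0 X1 X2"
  have "dR2 \<nu> X0 X1 X2 = h * ?d\<omega> + ?dh_\<omega>"
    unfolding \<nu>_def using D by (simp add: dR2_add dR2_mult_left dR2_dd_wedge)
  then have d\<nu>: "inI (h * ?d\<omega> + ?dh_\<omega>)"
    using dR2_inI[where \<nu> = \<nu>, OF \<nu>_inI X] by simp
  have "h * ?dh_\<omega> + d_wedge h dx1_dx2 X0 X1 X2 = d_wedge h \<nu> X0 X1 X2"
    by (simp add: d_wedge_def \<nu>_def algebra_simps)
  then have dh_\<nu>: "inI (h * ?dh_\<omega> + d_wedge h dx1_dx2 X0 X1 X2)"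
    using d_wedge_inI[where \<nu> = \<nu>, OF \<nu>_inI X] by simp
  have dh_dx1_dx2: "inI (d_wedge h dx1_dx2 X0 X1 X2)"
    unfolding h_def d_wedge_numeral_mult[OF D]
    by (rule inI_mult_left[OF d_wedge_pvar3_dx1_dx2_inI[OF X]])
  have "inI (h * (h * ?d\<omega>))"
    using inI_add[OF inI_diff[OF inI_mult_left[where q = h, OF d\<nu>] dh_\<nu>] dh_dx1_dx2]
    by (simp add: algebra_simps)
  then have "inI (4 * pvar V3 * (4 * pvar V3 * ?d\<omega>))" unfolding h_def .
  then have "inI (4 * pvar V3 * ?d\<omega>)" by (rule inI_cancel_numeral_pvar3)
  then show "inI ?d\<omega>" by (rule inI_cancel_numeral_pvar3)
qed

theorem mainTheorem3:
  shows "\<exists>\<omega> :: ('k::field_char_0 pol \<Rightarrow> 'k pol) \<Rightarrow> ('k pol \<Rightarrow> 'k pol) \<Rightarrow> 'k pol.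
           is_Alt2 \<omega> \<and> nondegenerate \<omega> \<and> dR_closed \<omega>
         \<and> (\<forall>a. \<forall>X\<in>DerIP. inI (\<omega> (ham a) X - X a))"
  using symp_form_Alt2 symp_form_nondegenerate symp_form_closed symp_form_ham by blast

end
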